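(* Let buyer types $(\theta,v)$ be distributed with density $f(\theta,v)=\tfrac12$ on the region $\{0\le v-\theta\le 1,\ 0\le\theta\le 2\}$ and $f=0$ elsewhere. Then the pricing scheme $$p(t)=\begin{cases}4/3, & t\in[0,1),\\ 2/3, & t\ge 1\end{cases}$$ is optimal, i.e. it maximizes expected revenue over all non-increasing pricing functions. Its separation function, which is the optimal separation line, is $$\ell_p(\theta)=\begin{cases}2/3+\theta, & 0\le\theta\le 2/3,\\ 4/3, & \theta>2/3.\end{cases}$$
   Context: Model: a seller sells identical items in unlimited supply to unit-demand buyers with types $(\theta,v)$. Here $\theta\ge0$ is the cost per unit time and $v$ the valuation. A pricing scheme is a non-increasing function $p:[0,\infty)\to\mathbb{R}$: spending time $t$ costs price $p(t)$. A buyer of type $(\theta,v)$ chooses $t^*(\theta)$, the smallest minimizer of $p(t)+\theta t$ over $t\ge0$, buys iff $p(t^*(\theta))+\theta t^*(\theta)\le v$, and then pays $p(t^*(\theta))$. The seller maximizes the expected payment. The separation function of $p$ is $\ell_p(\theta)=\min_{t\ge0}\{p(t)+\theta t\}$: a buyer of type $(\theta,v)$ buys iff $v\ge\ell_p(\theta)$, and she then pays $\ell_p(\theta)-\theta\ell_p'(\theta)$. *)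

theory Defs
  imports "HOL-Analysis.Analysis"
begin

text \<open>A pricing scheme: a function non-increasing on the time domain [0,\<infinity>).
  Values at negative arguments are irrelevant (times are restricted to t \<ge> 0).\<close>
definition pricing_scheme :: "(real \<Rightarrow> real) \<Rightarrow> bool" where
  "pricing_scheme p \<longleftrightarrow> (\<forall>s t. 0 \<le> s \<longrightarrow> s \<le> t \<longrightarrow> p t \<le> p s)"

definition least_minimizer :: "(real \<Rightarrow> real) \<Rightarrow> real \<Rightarrow> real \<Rightarrow> bool" where
  "least_minimizer p \<theta> t \<longleftrightarrow> 0 \<le> t \<and> (\<forall>s\<ge>0. p t + \<theta> * t \<le> p s + \<theta> * s)
     \<and> (\<forall>s. 0 \<le> s \<and> s < t \<longrightarrow> p t + \<theta> * t < p s + \<theta> * s)"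

definition well_defined_scheme :: "(real \<Rightarrow> real) \<Rightarrow> bool" where
  "well_defined_scheme p \<longleftrightarrow> (\<forall>\<theta>>0. \<exists>t. least_minimizer p \<theta> t)"

definition tstar :: "(real \<Rightarrow> real) \<Rightarrow> real \<Rightarrow> real" where
  "tstar p \<theta> = (THE t. least_minimizer p \<theta> t)"

text \<open>Payment of a buyer of type (\<theta>, v): she buys iff p(t*) + \<theta> t* \<le> v, and then pays p(t*).
  (If no smallest minimizer exists, she is taken not to buy.)\<close>
definition payment :: "(real \<Rightarrow> real) \<Rightarrow> real \<Rightarrow> real \<Rightarrow> real" where
  "payment p \<theta> v =
     (if (\<exists>t. least_minimizer p \<theta> t) \<and> p (tstar p \<theta>) + \<theta> * tstar p \<theta> \<le> v
      then p (tstar p \<theta>) else 0)"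

definition type_region :: "(real \<times> real) set" where
  "type_region = {(\<theta>, v). 0 \<le> v - \<theta> \<and> v - \<theta> \<le> 1 \<and> 0 \<le> \<theta> \<and> \<theta> \<le> 2}"

definition type_density :: "real \<times> real \<Rightarrow> real" where
  "type_density x = (if x \<in> type_region then 1/2 else 0)"

definition revenue :: "(real \<Rightarrow> real) \<Rightarrow> real" where
  "revenue p = (\<integral>x. type_density x * payment p (fst x) (snd x) \<partial>lborel)"

definition separation :: "(real \<Rightarrow> real) \<Rightarrow> real \<Rightarrow> real" where
  "separation p \<theta> = (INF t\<in>{0..}. p t + \<theta> * t)"

definition p_opt :: "real \<Rightarrow> real" where
  "p_opt t = (if t < 1 then 4/3 else 2/3)"

end

(*
  For a well-defined scheme q, the separation function L = separation q is concave on
  (0, infinity) with supergradient t = tstar q >= 0, and a buyer of type theta pays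
  q (t theta) = L theta - theta t theta. Since v is uniform on [theta, theta + 1], the
  theta-slice of the revenue is (L - theta L') clamp01 G / 2, where G = 1 + theta - L.
  With C = clamp01_prim this density equals residual G + (theta C(G))', where
  residual g = (1 - g) clamp01 g - C g; as L' = t holds only off a countable set, the
  integration is done by a monotonicity argument. Because L is nondecreasing,
  G theta >= G 2 + theta - 2; bounding residual by its tangents at the margins
  theta - 1/3 of p_opt then bounds the revenue by 22/27 for every G 2 >= 1 (for G 2 < 1
  the bound residual <= 1/6 suffices). The scheme p_opt attains 22/27.
*)
theory Submission
  imports Defs
begin

lemma last_level_point:
  fixes G :: "real \<Rightarrow> real"
  assumes "a \<le> b" and cont: "continuous_on {a..b} G" and y: "G b < y" "y < G a"
  obtains x where "a \<le> x" "x < b" "G x = y" "\<And>z. x < z \<Longrightarrow> z \<le> b \<Longrightarrow> G z < y"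
proof -
  define K where "K = {x\<in>{a..b}. y \<le> G x}"
  have "K = {a..b} \<inter> G -` {y..}" by (auto simp: K_def)
  then have "closed K" using continuous_closed_preimage[OF cont] by auto
  moreover have "a \<in> K" and bdd: "bdd_above K"
    using \<open>a \<le> b\<close> y by (auto simp: K_def intro: bdd_aboveI[of _ b])
  ultimately have "Sup K \<in> K"
    by (intro closed_contains_Sup) auto
  then obtain x where x: "x \<in> K" and x_def: "x = Sup K" by blast
  have after: "G z < y" if "x < z" "z \<le> b" for z
    using cSup_upper[OF _ bdd, of z] x that by (force simp: K_def x_def)
  have "x \<noteq> b" using x y by (auto simp: K_def)
  with x have "x < b" by (simp add: K_def)
  have "G x \<le> y"
  proof (rule tendsto_upperbound)
    show "(G \<longlongrightarrow> G x) (at_right x)"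
      using continuous_on_subset[OF cont, of "{x..b}"] x \<open>x < b\<close>
      by (intro continuous_on_Icc_at_rightD) (auto simp: K_def)
    show "eventually (\<lambda>z. G z \<le> y) (at_right x)"
      unfolding eventually_at_right_field using \<open>x < b\<close> after
      by (intro exI[of _ b]) (auto intro: less_imp_le)
  qed simp
  then show ?thesis using that[of x] x \<open>x < b\<close> after by (auto simp: K_def)
qed

lemma DERIV_nonneg_imp_increasing_countable:
  fixes F :: "real \<Rightarrow> real"
  assumes "a \<le> b" and "countable S" and cont: "continuous_on {a..b} F"
    and deriv: "\<And>x. x \<in> {a<..<b} - S \<Longrightarrow> \<exists>D\<ge>0. (F has_real_derivative D) (at x)"
  shows "F a \<le> F b"
proof (rule ccontr)
  assume "\<not> F a \<le> F b"
  with \<open>a \<le> b\<close> have "a < b" by (cases "a = b") auto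
  define \<delta> where "\<delta> = (F a - F b) / (2 * (b - a))"
  define G where "G x = F x + \<delta> * (x - a)" for x
  have "\<delta> > 0" using \<open>\<not> F a \<le> F b\<close> \<open>a < b\<close> by (simp add: \<delta>_def)
  have "\<delta> * (b - a) = (F a - F b) / 2" using \<open>a < b\<close> by (simp add: \<delta>_def field_simps)
  then have "G b < G a" using \<open>\<not> F a \<le> F b\<close> by (simp add: G_def)
  have "continuous_on {a..b} G"
    unfolding G_def by (intro continuous_intros cont)
  then have "\<forall>y\<in>{G b<..<G a}. \<exists>x. a \<le> x \<and> x < b \<and> G x = y \<and> (\<forall>z. x < z \<and> z \<le> b \<longrightarrow> G z < y)"
    using last_level_point[OF \<open>a \<le> b\<close>] by (metis greaterThanLessThan_iff)
  then obtain X where X: "\<And>y. y \<in> {G b<..<G a} \<Longrightarrow>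
      a \<le> X y \<and> X y < b \<and> G (X y) = y \<and> (\<forall>z. X y < z \<and> z \<le> b \<longrightarrow> G z < y)"
    by metis
  \<comment> \<open>G cannot increase right after the last point X y of a level set, while G' \<ge> \<delta> off S;
    so X maps an uncountable interval injectively into insert a S.\<close>
  have "X y \<in> insert a S" if y: "y \<in> {G b<..<G a}" for y
  proof (rule ccontr)
    assume "X y \<notin> insert a S"
    then have "X y \<in> {a<..<b} - S" using X[OF y] by auto
    then obtain D where "D \<ge> 0" "(F has_real_derivative D) (at (X y))" using deriv by blast
    then have "(G has_real_derivative D + \<delta>) (at (X y))"
      unfolding G_def by (auto intro!: derivative_eq_intros)
    then obtain h where "0 < h" "h < b - X y" "G (X y) < G (X y + h)"
      using DERIV_pos_inc_right[of G "D + \<delta>" "X y"] \<open>D \<ge> 0\<close> \<open>\<delta> > 0\<close> X[OF y]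
      by (metis add_nonneg_pos diff_gt_0_iff_gt field_lbound_gt_zero)
    moreover have "G (X y + h) < y" using X[OF y] \<open>0 < h\<close> \<open>h < b - X y\<close> by auto
    ultimately show False using X[OF y] by linarith
  qed
  moreover have "inj_on X {G b<..<G a}"
    by (rule inj_onI) (metis X)
  ultimately have "countable {G b<..<G a}"
    using countable_subset[of "X ` _" "insert a S"] \<open>countable S\<close>
    by (metis countable_image_inj_on countable_insert image_subsetI)
  then show False using uncountable_open_interval \<open>G b < G a\<close> by blast
qed

lemma has_real_derivative_of_quadratic_bound:
  fixes f :: "real \<Rightarrow> real"
  assumes bound: "\<And>x. \<bar>f x - f a - D * (x - a)\<bar> \<le> K * (x - a)^2"
  shows "(f has_real_derivative D) (at a)"
proof -
  have "((\<lambda>x. (f x - f a) / (x - a) - D) \<longlongrightarrow> 0) (at a)"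
  proof (rule Lim_null_comparison)
    show "eventually (\<lambda>x. norm ((f x - f a) / (x - a) - D) \<le> K * \<bar>x - a\<bar>) (at a)"
    proof (rule eventually_at_filter[THEN iffD2, OF always_eventually], intro allI impI)
      fix x assume "x \<noteq> a"
      then have "norm ((f x - f a) / (x - a) - D) = \<bar>f x - f a - D * (x - a)\<bar> / \<bar>x - a\<bar>"
        by (simp add: field_simps)
      also have "\<dots> \<le> K * (x - a)^2 / \<bar>x - a\<bar>"
        by (intro divide_right_mono bound) simp
      also have "\<dots> = K * (\<bar>x - a\<bar> * \<bar>x - a\<bar>) / \<bar>x - a\<bar>"
        by (simp add: power2_eq_square)
      also have "\<dots> = K * \<bar>x - a\<bar>"
        using \<open>x \<noteq> a\<close> by (simp del: abs_mult_self_eq)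
      finally show "norm ((f x - f a) / (x - a) - D) \<le> K * \<bar>x - a\<bar>" .
    qed
    show "((\<lambda>x. K * \<bar>x - a\<bar>) \<longlongrightarrow> 0) (at a)"
      by (intro tendsto_eq_intros) auto
  qed
  then show ?thesis
    by (simp add: has_field_derivative_iff LIM_zero_iff)
qed

lemma has_real_derivative_of_supergradient:
  fixes f g :: "real \<Rightarrow> real"
  assumes "open S" "x \<in> S"
    and supergradient: "\<And>u v. u \<in> S \<Longrightarrow> v \<in> S \<Longrightarrow> f v \<le> f u + (v - u) * g u"
    and "isCont g x"
  shows "(f has_real_derivative g x) (at x)"
proof -
  have "((\<lambda>y. (f y - f x) / (y - x) - g x) \<longlongrightarrow> 0) (at x)"
  proof (rule Lim_null_comparison)
    have "eventually (\<lambda>y. y \<in> S \<and> y \<noteq> x) (at x)"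
      using eventually_at_in_open'[OF \<open>open S\<close> \<open>x \<in> S\<close>] eventually_neq_at_within[of x x]
      by (rule eventually_conj)
    then show "eventually (\<lambda>y. norm ((f y - f x) / (y - x) - g x) \<le> \<bar>g y - g x\<bar>) (at x)"
    proof (rule eventually_mono, elim conjE)
      fix y assume "y \<in> S" "y \<noteq> x"
      define N where "N = f y - f x - (y - x) * g x"
      have "N \<le> 0" and "(y - x) * (g y - g x) \<le> N"
        using supergradient[OF \<open>x \<in> S\<close> \<open>y \<in> S\<close>] supergradient[OF \<open>y \<in> S\<close> \<open>x \<in> S\<close>]
        by (simp_all add: N_def algebra_simps)
      then have "\<bar>N\<bar> \<le> \<bar>y - x\<bar> * \<bar>g y - g x\<bar>"
        by (simp add: abs_mult[symmetric])
      moreover have "(f y - f x) / (y - x) - g x = N / (y - x)"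
        using \<open>y \<noteq> x\<close> by (simp add: N_def field_simps)
      ultimately show "norm ((f y - f x) / (y - x) - g x) \<le> \<bar>g y - g x\<bar>"
        using \<open>y \<noteq> x\<close> by (simp add: divide_le_eq mult.commute)
    qed
    show "((\<lambda>y. \<bar>g y - g x\<bar>) \<longlongrightarrow> 0) (at x)"
      using \<open>isCont g x\<close> by (intro tendsto_eq_intros) (auto simp: isCont_def)
  qed
  then show ?thesis
    by (simp add: has_field_derivative_iff LIM_zero_iff)
qed

definition clamp01 :: "real \<Rightarrow> real" where
  "clamp01 g = max 0 (min 1 g)"

definition clamp01_prim :: "real \<Rightarrow> real" where
  "clamp01_prim g = (max 0 g)^2 / 2 - (max 0 (g - 1))^2 / 2"

lemma has_real_derivative_half_square_pos:
  "((\<lambda>x. (max 0 x)^2 / 2) has_real_derivative max 0 a) (at a)"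
proof (rule has_real_derivative_of_quadratic_bound[where K = "1/2"])
  fix x :: real
  consider "x \<le> 0" "a \<le> 0" | "0 \<le> x" "a \<le> 0" | "x \<le> 0" "0 \<le> a" | "0 \<le> x" "0 \<le> a"
    by linarith
  then show "\<bar>(max 0 x)^2 / 2 - (max 0 a)^2 / 2 - max 0 a * (x - a)\<bar> \<le> 1/2 * (x - a)^2"
  proof cases
    case 2
    have "x^2 \<le> (x - a)^2" by (rule power_mono) (use 2 in auto)
    then show ?thesis using 2 by (simp add: max_def)
  next
    case 3
    then have "(max 0 x)^2 / 2 - (max 0 a)^2 / 2 - max 0 a * (x - a) = a^2 / 2 - a * x"
      by (simp add: max_def power2_eq_square algebra_simps)
    moreover have "1/2 * (x - a)^2 = x^2 / 2 - a * x + a^2 / 2"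
      by (simp add: power2_diff algebra_simps)
    moreover have "a * x \<le> 0" using 3 by (simp add: mult_nonneg_nonpos)
    moreover have "\<bar>a^2 / 2 - a * x\<bar> \<le> x^2 / 2 - a * x + a^2 / 2"
      using \<open>a * x \<le> 0\<close> zero_le_power2[of x] zero_le_power2[of a] by (intro abs_leI) linarith+
    ultimately show ?thesis by simp
  next
    case 4
    then have "(max 0 x)^2 / 2 - (max 0 a)^2 / 2 - max 0 a * (x - a) = 1/2 * (x - a)^2"
      by (simp add: max_def power2_eq_square algebra_simps)
    then show ?thesis by (simp only:) simp
  qed simp
qed

lemma has_real_derivative_clamp01_prim: "(clamp01_prim has_real_derivative clamp01 a) (at a)"
proof -
  have "((\<lambda>g. (max 0 g)^2 / 2 - (max 0 (g - 1))^2 / 2) has_real_derivative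
      max 0 a - max 0 (a - 1) * 1) (at a)"
    by (intro DERIV_diff has_real_derivative_half_square_pos
        DERIV_chain2[OF has_real_derivative_half_square_pos] derivative_eq_intros) auto
  moreover have "max 0 a - max 0 (a - 1) * 1 = clamp01 a"
    by (simp add: clamp01_def max_def min_def)
  ultimately show ?thesis
    by (simp add: clamp01_prim_def[abs_def])
qed

lemma isCont_clamp01 [continuous_intros]: "isCont g x \<Longrightarrow> isCont (\<lambda>x. clamp01 (g x)) x"
  unfolding clamp01_def by (intro continuous_intros)

lemma continuous_on_clamp01_prim [continuous_intros]:
  "continuous_on S g \<Longrightarrow> continuous_on S (\<lambda>x. clamp01_prim (g x))"
  unfolding clamp01_prim_def by (intro continuous_intros) auto

lemma clamp01_nonpos: "g \<le> 0 \<Longrightarrow> clamp01 g = 0"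
  and clamp01_unit: "0 \<le> g \<Longrightarrow> g \<le> 1 \<Longrightarrow> clamp01 g = g"
  and clamp01_ge1: "1 \<le> g \<Longrightarrow> clamp01 g = 1"
  by (simp_all add: clamp01_def)

lemma clamp01_prim_nonpos: "g \<le> 0 \<Longrightarrow> clamp01_prim g = 0"
  and clamp01_prim_unit: "0 \<le> g \<Longrightarrow> g \<le> 1 \<Longrightarrow> clamp01_prim g = g^2 / 2"
  and clamp01_prim_ge1: "1 \<le> g \<Longrightarrow> clamp01_prim g = g - 1/2"
  by (simp_all add: clamp01_prim_def power2_eq_square field_simps)

lemma clamp01_prim_nonneg: "0 \<le> clamp01_prim g"
  unfolding clamp01_prim_def by (auto simp: max_def intro: power_mono)

lemma clamp01_prim_le_half: "g \<le> 1 \<Longrightarrow> clamp01_prim g \<le> 1/2"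
  by (cases "g \<le> 0") (auto simp: clamp01_prim_nonpos clamp01_prim_unit power_le_one)

definition residual :: "real \<Rightarrow> real" where
  "residual g = (1 - g) * clamp01 g - clamp01_prim g"

lemma residual_nonpos: "g \<le> 0 \<Longrightarrow> residual g = 0"
  and residual_unit: "0 \<le> g \<Longrightarrow> g \<le> 1 \<Longrightarrow> residual g = g - 3/2 * g^2"
  and residual_ge1: "1 \<le> g \<Longrightarrow> residual g = 3/2 - 2 * g"
  by (simp_all add: residual_def clamp01_nonpos clamp01_unit clamp01_ge1 clamp01_prim_nonpos
      clamp01_prim_unit clamp01_prim_ge1 power2_eq_square algebra_simps)

lemma residual_le: "residual g \<le> 1/6"
proof -
  consider "g \<le> 0" | "0 \<le> g" "g \<le> 1" | "1 \<le> g" by linarith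
  then show ?thesis
  proof cases
    case 2
    have "0 \<le> (3 * g - 1)^2" by simp
    then show ?thesis unfolding residual_unit[OF 2] by (simp add: power2_eq_square algebra_simps)
  qed (simp_all add: residual_nonpos residual_ge1)
qed

definition residual_slope :: "real \<Rightarrow> real" where
  "residual_slope g = (if g \<le> 1 then 1 - 3 * g else -2)"

lemma residual_le_tangent_line:
  assumes "1/3 \<le> g0"
  shows "residual g \<le> residual g0 + residual_slope g0 * (g - g0)"
proof -
  consider "g \<le> 0" | "0 \<le> g" "g \<le> 1" | "1 \<le> g" by linarith
  note regions = this
  show ?thesis
  proof (cases "g0 \<le> 1")
    case True
    have "0 \<le> g0" using assms by simp
    from regions show ?thesis
    proof cases
      case 1
      have "0 \<le> (1 - 3 * g0) * g" by (rule mult_nonpos_nonpos) (use assms 1 in auto)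
      have "residual g = 0" by (rule residual_nonpos[OF 1])
      also have "\<dots> \<le> 3/2 * g0^2 + (1 - 3 * g0) * g" using \<open>0 \<le> (1 - 3 * g0) * g\<close> by simp
      also have "\<dots> = residual g0 + residual_slope g0 * (g - g0)"
        using True \<open>0 \<le> g0\<close>
        by (simp add: residual_slope_def residual_unit power2_eq_square algebra_simps)
      finally show ?thesis .
    next
      case 2
      have "0 \<le> (g - g0)^2" by simp
      then show ?thesis using True \<open>0 \<le> g0\<close>
        by (simp add: residual_slope_def residual_unit[OF 2] residual_unit power2_eq_square algebra_simps)
    next
      case 3
      have "0 \<le> (1 - g0) * (2 * g - g0 - 1)" by (rule mult_nonneg_nonneg) (use True 3 in auto)
      then show ?thesis using True \<open>0 \<le> g0\<close>
        by (simp add: residual_slope_def residual_ge1[OF 3] residual_unit power2_eq_square algebra_simps)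
    qed
  next
    case False
    have "residual g \<le> 3/2 - 2 * g"
      using regions
    proof cases
      case 2
      have "0 \<le> (g - 1)^2" by simp
      then show ?thesis unfolding residual_unit[OF 2] by (simp add: power2_eq_square algebra_simps)
    qed (simp_all add: residual_nonpos residual_ge1)
    then show ?thesis using False
      by (simp add: residual_slope_def residual_ge1 algebra_simps)
  qed
qed

lemma residual_le_tangent:
  assumes "1/3 \<le> g0" and "g0 + d \<le> g"
  shows "residual g \<le> residual g0 + residual_slope g0 * d"
proof -
  have "residual_slope g0 * (g - g0) \<le> residual_slope g0 * d"
    by (rule mult_left_mono_neg) (use assms in \<open>auto simp: residual_slope_def\<close>)
  then show ?thesis using residual_le_tangent_line[OF assms(1), of g] by linarith
qed

text \<open>For \<theta> \<ge> 2/3: the tangent of residual at the margin g0 = \<theta> - 1/3 of p_opt, evaluated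
  at g0 + d; for \<theta> < 2/3: the maximum 1/6 of residual.\<close>
definition residual_majorant :: "real \<Rightarrow> real \<Rightarrow> real" where
  "residual_majorant d \<theta> = (let g0 = max (1/3) (\<theta> - 1/3) in residual g0 + residual_slope g0 * d)"

lemma residual_le_majorant:
  assumes "\<theta> - 1/3 + d \<le> g"
  shows "residual g \<le> residual_majorant d \<theta>"
proof (cases "\<theta> \<le> 2/3")
  case True
  have "residual (1/3) = 1/6" by (simp add: residual_unit power2_eq_square)
  then show ?thesis using True residual_le[of g]
    by (simp add: residual_majorant_def residual_slope_def)
next
  case False
  then show ?thesis using residual_le_tangent[of "\<theta> - 1/3" d g] assms
    by (simp add: residual_majorant_def Let_def)
qed

definition residual_tangent_prim :: "real \<Rightarrow> real \<Rightarrow> real" where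
  "residual_tangent_prim d u = u^2 / 2 - u^3 / 2 + d * (u - 3/2 * u^2)"

lemma continuous_on_residual_tangent_prim [continuous_intros]:
  "continuous_on S g \<Longrightarrow> continuous_on S (\<lambda>x. residual_tangent_prim d (g x))"
  unfolding residual_tangent_prim_def by (intro continuous_intros) auto

lemma has_real_derivative_residual_tangent_prim:
  assumes "0 \<le> u" "u \<le> 1"
  shows "(residual_tangent_prim d has_real_derivative residual u + residual_slope u * d) (at u)"
proof -
  have "((\<lambda>u. u^2 / 2 - u^3 / 2 + d * (u - 3/2 * u^2)) has_real_derivative
      residual u + residual_slope u * d) (at u)"
    using assms by (auto intro!: derivative_eq_intros
        simp: residual_unit residual_slope_def power2_eq_square field_simps)
  then show ?thesis by (simp add: residual_tangent_prim_def[abs_def])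
qed

definition residual_majorant_prim :: "real \<Rightarrow> real \<Rightarrow> real" where
  "residual_majorant_prim d \<theta> =
    min \<theta> (2/3) / 6
    + (residual_tangent_prim d (max (2/3) (min \<theta> (4/3)) - 1/3) - residual_tangent_prim d (1/3))
    + (13/6 - 2 * d) * (max \<theta> (4/3) - 4/3) - ((max \<theta> (4/3))^2 - 16/9)"

lemma continuous_on_residual_majorant_prim: "continuous_on S (residual_majorant_prim d)"
  unfolding residual_majorant_prim_def by (intro continuous_intros) auto

lemma residual_majorant_prim_small: "\<theta> \<le> 2/3 \<Longrightarrow> residual_majorant_prim d \<theta> = \<theta> / 6"
  by (simp add: residual_majorant_prim_def power2_eq_square)

lemma residual_majorant_prim_2: "residual_majorant_prim d 2 = -19/27 - 2 * d"
  by (simp add: residual_majorant_prim_def residual_tangent_prim_def power2_eq_square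
      power3_eq_cube field_simps)

lemma has_real_derivative_residual_majorant_prim:
  assumes "\<theta> \<notin> {2/3, 4/3}"
  shows "(residual_majorant_prim d has_real_derivative residual_majorant d \<theta>) (at \<theta>)"
proof -
  consider "\<theta> < 2/3" | "2/3 < \<theta>" "\<theta> < 4/3" | "4/3 < \<theta>" using assms by force
  then show ?thesis
  proof cases
    case 1
    have "((\<lambda>\<theta>. \<theta> / 6) has_real_derivative residual_majorant d \<theta>) (at \<theta>)"
      using 1 by (auto intro!: derivative_eq_intros
          simp: residual_majorant_def residual_slope_def residual_unit power2_eq_square)
    then show ?thesis
      by (rule has_field_derivative_transform_within_open[of _ _ _ "{..<2/3}"])
         (use 1 in \<open>auto simp: residual_majorant_prim_def power2_eq_square\<close>)
  next
    case 2
    have "((\<lambda>\<theta>. 1/9 + (residual_tangent_prim d (\<theta> - 1/3) - residual_tangent_prim d (1/3)))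
        has_real_derivative residual_majorant d \<theta>) (at \<theta>)"
      using 2 by (auto intro!: derivative_eq_intros
          DERIV_chain2[OF has_real_derivative_residual_tangent_prim] simp: residual_majorant_def Let_def)
    then show ?thesis
      by (rule has_field_derivative_transform_within_open[of _ _ _ "{2/3<..<4/3}"])
         (use 2 in \<open>auto simp: residual_majorant_prim_def power2_eq_square\<close>)
  next
    case 3
    have "((\<lambda>\<theta>. 1/9 + (residual_tangent_prim d 1 - residual_tangent_prim d (1/3))
          + (13/6 - 2 * d) * (\<theta> - 4/3) - (\<theta>^2 - 16/9))
        has_real_derivative residual_majorant d \<theta>) (at \<theta>)"
      using 3 by (auto intro!: derivative_eq_intros
          simp: residual_majorant_def residual_slope_def residual_ge1 algebra_simps)
    then show ?thesis
      by (rule has_field_derivative_transform_within_open[of _ _ _ "{4/3<..}"])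
         (use 3 in \<open>auto simp: residual_majorant_prim_def\<close>)
  qed
qed

locale concave_with_supergradient =
  fixes L t :: "real \<Rightarrow> real"
  assumes slope_nonneg: "0 < \<theta> \<Longrightarrow> 0 \<le> t \<theta>"
    and supergradient: "0 < \<theta> \<Longrightarrow> 0 < \<theta>' \<Longrightarrow> L \<theta>' \<le> L \<theta> + (\<theta>' - \<theta>) * t \<theta>"
begin

lemma slope_antimono:
  assumes "0 < x" "x \<le> y"
  shows "t y \<le> t x"
proof (cases "x = y")
  case False
  have "(y - x) * t y \<le> (y - x) * t x"
    using supergradient[of x y] supergradient[of y x] assms by (simp add: algebra_simps)
  then show ?thesis using False assms by simp
qed simp

lemma L_mono:
  assumes "0 < x" "x \<le> y"
  shows "L x \<le> L y"
  using supergradient[of y x] mult_nonpos_nonneg[of "x - y" "t y"] slope_nonneg[of y] assms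
  by linarith

lemma L_lipschitz_on:
  assumes "0 < a"
  shows "(t a)-lipschitz_on {a..} L"
proof (rule lipschitz_onI)
  have key: "\<bar>L v - L u\<bar> \<le> t a * (v - u)" if "a \<le> u" "u \<le> v" for u v
  proof -
    have "L v - L u \<le> (v - u) * t u" using supergradient[of u v] that assms by simp
    also have "\<dots> \<le> (v - u) * t a" using slope_antimono[of a u] that assms by (intro mult_left_mono) auto
    finally show ?thesis using L_mono[of u v] that assms by (simp add: mult.commute)
  qed
  then show "dist (L x) (L y) \<le> t a * dist x y" if "x \<in> {a..}" "y \<in> {a..}" for x y
    using that key[of x y] key[of y x] by (cases "x \<le> y") (auto simp: dist_real_def abs_minus_commute)
qed (use slope_nonneg assms in auto)

lemma countable_slope_discontinuities: "countable {x\<in>{0<..}. \<not> isCont t x}"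
proof -
  have "countable {x\<in>{0<..}. \<not> isCont (\<lambda>x. - t x) x}"
    by (rule mono_on_ctble_discont_open) (auto simp: mono_on_def intro: slope_antimono)
  moreover have "isCont t x" if "isCont (\<lambda>x. - t x) x" for x
    using isCont_minus[OF that] by simp
  ultimately show ?thesis by (auto elim!: countable_subset[rotated])
qed

lemma L_has_real_derivative:
  assumes "0 < x" "isCont t x"
  shows "(L has_real_derivative t x) (at x)"
  by (rule has_real_derivative_of_supergradient[of "{0<..}"]) (use assms supergradient in auto)

lemma has_real_derivative_weighted_prim:
  assumes "0 < x" "isCont t x"
  shows "((\<lambda>\<theta>. \<theta> * clamp01_prim (1 + \<theta> - L \<theta>)) has_real_derivative
      (L x - x * t x) * clamp01 (1 + x - L x) - residual (1 + x - L x)) (at x)"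
proof -
  have "((\<lambda>\<theta>. 1 + \<theta> - L \<theta>) has_real_derivative 1 - t x) (at x)"
    using L_has_real_derivative[OF assms] by (auto intro!: derivative_eq_intros)
  from DERIV_chain2[OF has_real_derivative_clamp01_prim this]
  have "((\<lambda>\<theta>. \<theta> * clamp01_prim (1 + \<theta> - L \<theta>)) has_real_derivative
      x * (clamp01 (1 + x - L x) * (1 - t x)) + 1 * clamp01_prim (1 + x - L x)) (at x)"
    by (rule DERIV_mult'[OF DERIV_ident])
  then show ?thesis
    by (simp add: residual_def algebra_simps)
qed

lemma integral_density_le_by_parts:
  assumes "0 < a" "a \<le> c"
    and int: "(\<lambda>\<theta>. (L \<theta> - \<theta> * t \<theta>) * clamp01 (1 + \<theta> - L \<theta>)) integrable_on {a..c}"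
    and B: "continuous_on {a..c} B" "finite Z"
      "\<And>x. x \<in> {a<..<c} - Z \<Longrightarrow> (B has_real_derivative b x) (at x)"
    and majorant: "\<And>x. x \<in> {a<..<c} \<Longrightarrow> residual (1 + x - L x) \<le> b x"
  shows "integral {a..c} (\<lambda>\<theta>. (L \<theta> - \<theta> * t \<theta>) * clamp01 (1 + \<theta> - L \<theta>))
    \<le> c * clamp01_prim (1 + c - L c) - a * clamp01_prim (1 + a - L a) + B c - B a"
proof -
  define f where "f = (\<lambda>\<theta>. (L \<theta> - \<theta> * t \<theta>) * clamp01 (1 + \<theta> - L \<theta>))"
  have int_f: "f integrable_on {a..c}" using int by (simp add: f_def)
  define F where "F \<theta> = \<theta> * clamp01_prim (1 + \<theta> - L \<theta>) + B \<theta> - integral {a..\<theta>} f" for \<theta>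
  define S where "S = {x\<in>{0<..}. \<not> isCont t x} \<union> Z"
  have "continuous_on {a..c} L"
    using lipschitz_on_continuous_on[OF L_lipschitz_on[OF \<open>0 < a\<close>]] by (rule continuous_on_subset) auto
  have "countable S"
    using countable_slope_discontinuities \<open>finite Z\<close> by (simp add: S_def countable_finite)
  moreover have "continuous_on {a..c} F"
    unfolding F_def using B(1) \<open>continuous_on {a..c} L\<close>
    by (intro continuous_intros indefinite_integral_continuous_1 int_f) auto
  moreover have "\<exists>D\<ge>0. (F has_real_derivative D) (at x)" if x: "x \<in> {a<..<c} - S" for x
  proof -
    have "0 < x" "isCont t x" using x \<open>0 < a\<close> by (auto simp: S_def)
    then have "isCont f x"
      unfolding f_def using DERIV_isCont[OF L_has_real_derivative] by (intro continuous_intros) auto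
    then have "((\<lambda>u. integral {a..u} f) has_vector_derivative f x) (at x within {a..c} - {})"
      by (intro integral_has_vector_derivative_continuous_at[OF int_f])
         (use x in \<open>auto intro: continuous_at_imp_continuous_at_within\<close>)
    then have "((\<lambda>u. integral {a..u} f) has_real_derivative f x) (at x)"
      using x by (simp add: at_within_Icc_at has_real_derivative_iff_has_vector_derivative)
    then have "(F has_real_derivative (f x - residual (1 + x - L x)) + b x - f x) (at x)"
      unfolding F_def f_def
      using has_real_derivative_weighted_prim[OF \<open>0 < x\<close> \<open>isCont t x\<close>] B(3)[of x] x
      by (intro DERIV_diff DERIV_add) (auto simp: S_def)
    then show ?thesis using majorant[of x] x by (intro exI[of _ "b x - residual (1 + x - L x)"]) auto
  qed
  ultimately have "F a \<le> F c"
    by (rule DERIV_nonneg_imp_increasing_countable[OF \<open>a \<le> c\<close>])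
  then show ?thesis by (simp add: F_def f_def)
qed

lemma integral_density_le:
  assumes "0 < \<epsilon>" "\<epsilon> \<le> 2/3"
    and "(\<lambda>\<theta>. (L \<theta> - \<theta> * t \<theta>) * clamp01 (1 + \<theta> - L \<theta>)) integrable_on {\<epsilon>..2}"
  shows "integral {\<epsilon>..2} (\<lambda>\<theta>. (L \<theta> - \<theta> * t \<theta>) * clamp01 (1 + \<theta> - L \<theta>)) \<le> 44/27"
proof -
  let ?I = "integral {\<epsilon>..2} (\<lambda>\<theta>. (L \<theta> - \<theta> * t \<theta>) * clamp01 (1 + \<theta> - L \<theta>))"
  have "0 \<le> \<epsilon> * clamp01_prim (1 + \<epsilon> - L \<epsilon>)"
    using assms clamp01_prim_nonneg by simp
  show ?thesis
  proof (cases "1 + 2 - L 2 < 1")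
    case True
    have "?I \<le> 2 * clamp01_prim (1 + 2 - L 2) - \<epsilon> * clamp01_prim (1 + \<epsilon> - L \<epsilon>) + 2 / 6 - \<epsilon> / 6"
      by (rule integral_density_le_by_parts[where Z = "{}" and b = "\<lambda>_. 1/6"])
         (use assms residual_le in \<open>auto intro!: continuous_intros derivative_eq_intros\<close>)
    moreover have "clamp01_prim (1 + 2 - L 2) \<le> 1/2"
      using True by (intro clamp01_prim_le_half) simp
    ultimately show ?thesis
      using \<open>0 \<le> \<epsilon> * clamp01_prim (1 + \<epsilon> - L \<epsilon>)\<close> assms by linarith
  next
    case False
    \<comment> \<open>the margin at 2 exceeds that of p_opt by d; the resulting bound does not depend on d\<close>
    define d where "d = (1 + 2 - L 2) - 5/3"
    have "?I \<le> 2 * clamp01_prim (1 + 2 - L 2) - \<epsilon> * clamp01_prim (1 + \<epsilon> - L \<epsilon>)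
        + residual_majorant_prim d 2 - residual_majorant_prim d \<epsilon>"
    proof (rule integral_density_le_by_parts[where Z = "{2/3, 4/3}"])
      show "residual (1 + x - L x) \<le> residual_majorant d x" if "x \<in> {\<epsilon><..<2}" for x
        using L_mono[of x 2] that assms by (intro residual_le_majorant) (auto simp: d_def)
    qed (use assms in \<open>auto intro: continuous_on_residual_majorant_prim
      has_real_derivative_residual_majorant_prim\<close>)
    moreover have "clamp01_prim (1 + 2 - L 2) = (1 + 2 - L 2) - 1/2"
      using False by (intro clamp01_prim_ge1) simp
    ultimately show ?thesis
      using \<open>0 \<le> \<epsilon> * clamp01_prim (1 + \<epsilon> - L \<epsilon>)\<close> assms
      by (simp add: residual_majorant_prim_2 residual_majorant_prim_small d_def)
  qed
qed

end

lemma least_minimizer_unique: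
  assumes "least_minimizer p \<theta> t1" "least_minimizer p \<theta> t2"
  shows "t1 = t2"
  using assms unfolding least_minimizer_def by (meson linorder_neqE_linordered_idom not_le)

lemma least_minimizer_tstar:
  "least_minimizer p \<theta> t \<Longrightarrow> least_minimizer p \<theta> (tstar p \<theta>)"
  unfolding tstar_def by (metis least_minimizer_unique theI)

lemma tstar_eq: "least_minimizer p \<theta> t \<Longrightarrow> tstar p \<theta> = t"
  using least_minimizer_tstar least_minimizer_unique by blast

lemma well_defined_scheme_least_minimizer:
  "well_defined_scheme p \<Longrightarrow> 0 < \<theta> \<Longrightarrow> least_minimizer p \<theta> (tstar p \<theta>)"
  unfolding well_defined_scheme_def by (blast intro: least_minimizer_tstar)

lemma separation_eq:
  assumes "least_minimizer p \<theta> t"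
  shows "separation p \<theta> = p t + \<theta> * t"
  unfolding separation_def
  by (rule cInf_eq_minimum) (use assms in \<open>auto simp: least_minimizer_def\<close>)

lemma payment_eq:
  assumes "least_minimizer p \<theta> t"
  shows "payment p \<theta> v = (if separation p \<theta> \<le> v then p t else 0)"
  using assms by (auto simp: payment_def tstar_eq separation_eq)

lemma concave_with_supergradient_separation:
  assumes "well_defined_scheme q"
  shows "concave_with_supergradient (separation q) (tstar q)"
proof
  note lm = well_defined_scheme_least_minimizer[OF assms]
  show "0 \<le> tstar q \<theta>" if "0 < \<theta>" for \<theta>
    using lm[OF that] by (simp add: least_minimizer_def)
  show "separation q \<theta>' \<le> separation q \<theta> + (\<theta>' - \<theta>) * tstar q \<theta>" if "0 < \<theta>" "0 < \<theta>'" for \<theta> \<theta>'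
    using lm[OF that(1)] lm[OF that(2)]
    by (auto simp: separation_eq least_minimizer_def algebra_simps)
qed

definition slice_revenue :: "(real \<Rightarrow> real) \<Rightarrow> real \<Rightarrow> real" where
  "slice_revenue p \<theta> =
    (if 0 < \<theta> \<and> \<theta> \<le> 2 then p (tstar p \<theta>) * clamp01 (1 + \<theta> - separation p \<theta>) / 2 else 0)"

lemma integral_type_density_payment:
  assumes "well_defined_scheme p" "\<theta> \<noteq> 0"
  shows "(\<integral>v. type_density (\<theta>, v) * payment p \<theta> v \<partial>lborel) = slice_revenue p \<theta>"
proof (cases "0 < \<theta> \<and> \<theta> \<le> 2")
  case True
  then have lm: "least_minimizer p \<theta> (tstar p \<theta>)"
    using assms(1) by (blast intro: well_defined_scheme_least_minimizer)
  define a where "a = max \<theta> (separation p \<theta>)"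
  have eq: "type_density (\<theta>, v) * payment p \<theta> v = p (tstar p \<theta>) / 2 * indicator {a..\<theta> + 1} v" for v
    using True by (auto simp: type_density_def type_region_def payment_eq[OF lm] a_def indicator_def)
  have "(\<integral>v. type_density (\<theta>, v) * payment p \<theta> v \<partial>lborel)
      = p (tstar p \<theta>) / 2 * measure lborel {a..\<theta> + 1}"
    unfolding eq by simp
  also have "measure lborel {a..\<theta> + 1} = clamp01 (1 + \<theta> - separation p \<theta>)"
    by (auto simp: a_def clamp01_def)
  finally show ?thesis using True by (simp add: slice_revenue_def)
next
  case False
  then have "type_density (\<theta>, v) = 0" for v
    using assms(2) by (auto simp: type_density_def type_region_def)
  then show ?thesis using False by (auto simp: slice_revenue_def)
qed

lemma has_integral_slice_revenue:
  assumes "well_defined_scheme p"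
    and int: "integrable lborel (\<lambda>x. type_density x * payment p (fst x) (snd x))"
  shows "(slice_revenue p has_integral revenue p) {0..2}"
proof -
  define F where "F = (\<lambda>x. type_density x * payment p (fst x) (snd x))"
  have int2: "integrable (lborel \<Otimes>\<^sub>M lborel) F"
    using int by (simp add: F_def lborel_prod)
  define R where "R \<theta> = (\<integral>v. F (\<theta>, v) \<partial>lborel)" for \<theta>
  have "revenue p = (\<integral>\<theta>. R \<theta> \<partial>lborel)"
    using lborel_pair.integral_fst'[OF int2] by (simp add: revenue_def F_def R_def lborel_prod)
  moreover have "(R has_integral (\<integral>\<theta>. R \<theta> \<partial>lborel)) UNIV"
    unfolding R_def by (intro has_integral_integral_lborel lborel_pair.integrable_fst'[OF int2])
  moreover have "R \<theta> = slice_revenue p \<theta>" if "\<theta> \<notin> {0}" for \<theta>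
    using integral_type_density_payment[OF assms(1)] that by (simp add: R_def F_def)
  ultimately have "(slice_revenue p has_integral revenue p) UNIV"
    using has_integral_spike_finite_eq[of "{0}" UNIV R "slice_revenue p"] by auto
  moreover have "(\<lambda>\<theta>. if \<theta> \<in> {0..2} then slice_revenue p \<theta> else 0) = slice_revenue p"
    by (auto simp: slice_revenue_def)
  ultimately show ?thesis
    using has_integral_restrict_UNIV[of "{0..2}" "slice_revenue p"] by simp
qed

lemma integral_le_of_tails:
  fixes f :: "real \<Rightarrow> real"
  assumes "f integrable_on {a..b}" "a < b" "0 < \<delta>"
    and tails: "\<And>\<epsilon>. a < \<epsilon> \<Longrightarrow> \<epsilon> \<le> a + \<delta> \<Longrightarrow> integral {\<epsilon>..b} f \<le> c"
  shows "integral {a..b} f \<le> c"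
proof (rule tendsto_upperbound)
  show "((\<lambda>\<epsilon>. integral {\<epsilon>..b} f) \<longlongrightarrow> integral {a..b} f) (at_right a)"
    using indefinite_integral_continuous_1'[OF assms(1)] \<open>a < b\<close>
    by (rule continuous_on_Icc_at_rightD)
  show "eventually (\<lambda>\<epsilon>. integral {\<epsilon>..b} f \<le> c) (at_right a)"
    unfolding eventually_at_right_field using \<open>0 < \<delta>\<close> tails
    by (intro exI[of _ "a + \<delta>"]) auto
qed simp

lemma revenue_le_22_27:
  assumes "well_defined_scheme q"
  shows "revenue q \<le> 22/27"
proof (cases "integrable lborel (\<lambda>x. type_density x * payment q (fst x) (snd x))")
  case True
  interpret concave_with_supergradient "separation q" "tstar q"
    using assms by (rule concave_with_supergradient_separation)
  have slices: "(slice_revenue q has_integral revenue q) {0..2}"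
    using assms True by (rule has_integral_slice_revenue)
  let ?f = "\<lambda>\<theta>. (separation q \<theta> - \<theta> * tstar q \<theta>) * clamp01 (1 + \<theta> - separation q \<theta>)"
  have slice_eq: "slice_revenue q \<theta> = ?f \<theta> / 2" if "0 < \<theta>" "\<theta> \<le> 2" for \<theta>
    using that well_defined_scheme_least_minimizer[OF assms, of \<theta>]
    by (simp add: slice_revenue_def separation_eq)
  \<comment> \<open>L is Lipschitz only away from 0, so the bound is proved on [\<epsilon>, 2] and \<epsilon> tends to 0\<close>
  have "integral {0..2} (slice_revenue q) \<le> 22/27"
  proof (rule integral_le_of_tails[where \<delta> = "2/3"])
    fix \<epsilon> :: real assume \<epsilon>: "0 < \<epsilon>" "\<epsilon> \<le> 0 + 2/3"
    then have eq: "slice_revenue q \<theta> = ?f \<theta> / 2" if "\<theta> \<in> {\<epsilon>..2}" for \<theta>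
      using slice_eq that by auto
    have "slice_revenue q integrable_on {\<epsilon>..2}"
      using slices \<epsilon> by (auto intro: integrable_on_subinterval)
    then have "(\<lambda>\<theta>. ?f \<theta> / 2) integrable_on {\<epsilon>..2}"
      using eq by (rule integrable_eq)
    then have "integral {\<epsilon>..2} ?f \<le> 44/27"
      using \<epsilon> integrable_on_cdivide_iff[of 2 ?f] by (intro integral_density_le) auto
    moreover have "integral {\<epsilon>..2} (slice_revenue q) = integral {\<epsilon>..2} (\<lambda>\<theta>. ?f \<theta> / 2)"
      using eq by (rule integral_cong)
    ultimately show "integral {\<epsilon>..2} (slice_revenue q) \<le> 22/27" by simp
  qed (use slices in auto)
  then show ?thesis using slices by (simp add: integral_unique)
next
  case False
  then show ?thesis by (simp add: revenue_def not_integrable_integral_eq)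
qed

lemma least_minimizer_p_opt:
  assumes "0 \<le> \<theta>"
  shows "least_minimizer p_opt \<theta> (if \<theta> < 2/3 then 1 else 0)"
proof (cases "\<theta> < 2/3")
  case True
  have lt: "p_opt 1 + \<theta> * 1 < p_opt s + \<theta> * s" if "0 \<le> s" "s < 1" for s
  proof -
    have "p_opt s = 4/3" "p_opt 1 = 2/3" using that by (simp_all add: p_opt_def)
    moreover have "0 \<le> \<theta> * s" using assms that by simp
    ultimately show ?thesis using True by linarith
  qed
  moreover have "p_opt 1 + \<theta> * 1 \<le> p_opt s + \<theta> * s" if "1 \<le> s" for s
    using that assms mult_left_mono[of 1 s \<theta>] by (simp add: p_opt_def)
  ultimately have "p_opt 1 + \<theta> * 1 \<le> p_opt s + \<theta> * s" if "0 \<le> s" for s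
    using that by (cases "s < 1") (auto intro: less_imp_le)
  then show ?thesis
    using True lt by (simp add: least_minimizer_def)
next
  case False
  have "p_opt 0 + \<theta> * 0 \<le> p_opt s + \<theta> * s" if "0 \<le> s" for s
  proof (cases "s < 1")
    case True
    then show ?thesis using assms that by (simp add: p_opt_def)
  next
    case False
    then have "p_opt s = 2/3" "p_opt 0 = 4/3" "\<theta> \<le> \<theta> * s"
      using assms mult_left_mono[of 1 s \<theta>] by (simp_all add: p_opt_def)
    then show ?thesis using \<open>\<not> \<theta> < 2/3\<close> by linarith
  qed
  then show ?thesis
    using False by (auto simp: least_minimizer_def)
qed

lemma pricing_scheme_p_opt: "pricing_scheme p_opt"
  unfolding pricing_scheme_def p_opt_def by auto

lemma well_defined_scheme_p_opt: "well_defined_scheme p_opt"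
  unfolding well_defined_scheme_def using least_minimizer_p_opt by (blast intro: less_imp_le)

lemma separation_p_opt:
  "0 \<le> \<theta> \<Longrightarrow> separation p_opt \<theta> = (if \<theta> \<le> 2/3 then 2/3 + \<theta> else 4/3)"
  by (auto simp: separation_eq[OF least_minimizer_p_opt] p_opt_def)

lemma payment_p_opt:
  "0 \<le> \<theta> \<Longrightarrow> payment p_opt \<theta> v =
    (if \<theta> < 2/3 then (if 2/3 + \<theta> \<le> v then 2/3 else 0) else (if 4/3 \<le> v then 4/3 else 0))"
  by (auto simp: payment_eq[OF least_minimizer_p_opt] separation_p_opt p_opt_def)

lemma slice_revenue_p_opt:
  "slice_revenue p_opt \<theta> =
    (if 0 < \<theta> \<and> \<theta> \<le> 2 then (if \<theta> < 2/3 then 1/9 else 2/3 * min 1 (\<theta> - 1/3)) else 0)"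
  by (auto simp: slice_revenue_def tstar_eq[OF least_minimizer_p_opt] separation_p_opt p_opt_def
      clamp01_def)

lemma closed_type_region: "closed type_region"
proof -
  have "type_region = {x. fst x \<le> snd x \<and> snd x - fst x \<le> 1 \<and> 0 \<le> fst x \<and> fst x \<le> 2}"
    by (auto simp: type_region_def)
  also have "closed \<dots>"
    by (intro closed_Collect_conj closed_Collect_le continuous_intros)
  finally show ?thesis .
qed

lemma integrable_revenue_p_opt:
  "integrable lborel (\<lambda>x. type_density x * payment p_opt (fst x) (snd x))"
proof -
  define P :: "real \<times> real \<Rightarrow> real" where "P x = (if fst x < 2/3
    then (if 2/3 + fst x \<le> snd x then 2/3 else 0) else (if 4/3 \<le> snd x then 4/3 else 0))" for x
  have eq: "type_density x * payment p_opt (fst x) (snd x) = type_density x * P x" for x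
    by (cases "0 \<le> fst x") (auto simp: payment_p_opt P_def type_density_def type_region_def)
  let ?B = "cbox (0::real, 0::real) (2, 3)"
  have bound: "integrable lborel (\<lambda>x. 2/3 * indicator ?B x :: real)"
    by (intro integrable_mult_right integrable_real_indicator emeasure_lborel_cbox_finite) simp
  have [measurable]: "type_region \<in> sets (lborel \<Otimes>\<^sub>M lborel)"
    unfolding lborel_prod using closed_type_region by (simp add: borel_closed)
  have "(\<lambda>x. type_density x * P x) \<in> borel_measurable (lborel \<Otimes>\<^sub>M lborel)"
    unfolding type_density_def P_def by measurable
  then have meas: "(\<lambda>x. type_density x * P x) \<in> borel_measurable lborel"
    by (simp only: lborel_prod)
  have "norm (type_density x * P x) \<le> norm (2/3 * indicator ?B x :: real)" for x
  proof (cases "x \<in> type_region")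
    case True
    then have "x \<in> ?B" by (cases x) (auto simp: type_region_def cbox_Pair_eq)
    moreover have "\<bar>P x\<bar> \<le> 4/3" by (simp add: P_def)
    ultimately show ?thesis using True by (simp add: type_density_def)
  qed (simp add: type_density_def)
  then have "integrable lborel (\<lambda>x. type_density x * P x)"
    by (intro Bochner_Integration.integrable_bound[OF bound meas]) auto
  then show ?thesis by (simp add: eq)
qed

lemma has_integral_slice_revenue_p_opt: "(slice_revenue p_opt has_integral 22/27) {0..2}"
proof -
  define R where "R \<theta> = min \<theta> (2/3) / 9 + ((max (2/3) (min \<theta> (4/3)) - 1/3)^2 - 1/9) / 3
    + 2/3 * (max \<theta> (4/3) - 4/3)" for \<theta> :: real
  have "(slice_revenue p_opt has_integral (R 2 - R 0)) {0..2}"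
  proof (rule fundamental_theorem_of_calculus_interior_strong[of "{2/3, 4/3}"])
    show "continuous_on {0..2} R" unfolding R_def by (intro continuous_intros) auto
    fix x :: real assume x: "x \<in> {0<..<2} - {2/3, 4/3}"
    consider "x < 2/3" | "2/3 < x" "x < 4/3" | "4/3 < x" using x by force
    then have "(R has_real_derivative slice_revenue p_opt x) (at x)"
    proof cases
      case 1
      have "((\<lambda>\<theta>. \<theta> / 9) has_real_derivative slice_revenue p_opt x) (at x)"
        using 1 x by (auto intro!: derivative_eq_intros simp: slice_revenue_p_opt)
      then show ?thesis
        by (rule has_field_derivative_transform_within_open[of _ _ _ "{..<2/3}"])
           (use 1 in \<open>auto simp: R_def power2_eq_square\<close>)
    next
      case 2
      have "((\<lambda>\<theta>. 2/27 + ((\<theta> - 1/3)^2 - 1/9) / 3) has_real_derivative slice_revenue p_opt x) (at x)"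
        using 2 by (auto intro!: derivative_eq_intros simp: slice_revenue_p_opt field_simps)
      then show ?thesis
        by (rule has_field_derivative_transform_within_open[of _ _ _ "{2/3<..<4/3}"])
           (use 2 in \<open>auto simp: R_def\<close>)
    next
      case 3
      have "((\<lambda>\<theta>. 2/27 + 8/27 + 2/3 * (\<theta> - 4/3)) has_real_derivative slice_revenue p_opt x) (at x)"
        using 3 x by (auto intro!: derivative_eq_intros simp: slice_revenue_p_opt)
      then show ?thesis
        by (rule has_field_derivative_transform_within_open[of _ _ _ "{4/3<..}"])
           (use 3 in \<open>auto simp: R_def power2_eq_square\<close>)
    qed
    then show "(R has_vector_derivative slice_revenue p_opt x) (at x)"
      by (simp add: has_real_derivative_iff_has_vector_derivative)
  qed auto
  moreover have "R 2 - R 0 = 22/27" by (simp add: R_def power2_eq_square)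
  ultimately show ?thesis by simp
qed

theorem theorem5:
  shows "pricing_scheme p_opt \<and> well_defined_scheme p_opt
    \<and> (\<forall>q. pricing_scheme q \<and> well_defined_scheme q \<longrightarrow> revenue q \<le> revenue p_opt)
    \<and> (\<forall>\<theta>\<ge>0. separation p_opt \<theta> = (if \<theta> \<le> 2/3 then 2/3 + \<theta> else 4/3))"
proof -
  have "(slice_revenue p_opt has_integral revenue p_opt) {0..2}"
    using well_defined_scheme_p_opt integrable_revenue_p_opt by (rule has_integral_slice_revenue)
  then have "revenue p_opt = 22/27"
    using has_integral_slice_revenue_p_opt by (rule has_integral_unique)
  then have "revenue q \<le> revenue p_opt" if "well_defined_scheme q" for q
    using revenue_le_22_27[OF that] by simp
  then show ?thesis
    using pricing_scheme_p_opt well_defined_scheme_p_opt separation_p_opt by blast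
qed

end
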